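(* Let $f_0(i)=i$ for all $i\ge1$. Then for $1\le k\le n$, \[c_1(n,k)=\binom{n+k-1}{2k-1},\] and for every $m\ge1$, \[c_m(n,k)=\sum_{i=k}^n(m-1)^{i-k}\binom{i-1}{k-1}\binom{n+i-1}{2i-1}.\]
   Context: For $m\ge 1$, $f_m$ is the invert transform of $f_{m-1}$, i.e. $f_m(n)=f_{m-1}(n)+\sum_{i=1}^{n-1}f_{m-1}(i)f_m(n-i)$ for $n\ge1$. For $m\ge1$ the numbers $c_m(n,k)$, $0\le k\le n$, are defined by $c_m(0,0)=1$, $c_m(n,0)=0$ for $n\ge1$, and $c_m(n,k)=\sum_{i=1}^{n-k+1}f_{m-1}(i)\,c_m(n-i,k-1)$ for $1\le k\le n$. The convention $0^0=1$ is used. *)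

theory Defs
  imports Main
begin

text \<open>Invert transform of a sequence a (indexed from 1; the value at 0 is irrelevant
  and set to 0): b(n) = a(n) + sum_{i=1}^{n-1} a(i) b(n-i) for n >= 1.\<close>
function invert :: "(nat \<Rightarrow> nat) \<Rightarrow> nat \<Rightarrow> nat" where
  "invert a n = (if n = 0 then 0
                 else a n + (\<Sum>i\<in>{1..<n}. a i * invert a (n - i)))"
  by auto
termination by (relation "measure (\<lambda>(a, n). n)") auto

declare invert.simps [simp del]

definition fseq :: "(nat \<Rightarrow> nat) \<Rightarrow> nat \<Rightarrow> nat \<Rightarrow> nat" where
  "fseq f0 m = (invert ^^ m) f0"

text \<open>c(n,k) built from a base sequence g (for c_m, g = f_{m-1}):
  c(0,0)=1, c(n,0)=0 for n>=1, c(n,k)=sum_{i=1}^{n-k+1} g(i) c(n-i,k-1) for 1<=k<=n.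
  Values for k > n are not used (set to 0).\<close>
function cseq :: "(nat \<Rightarrow> nat) \<Rightarrow> nat \<Rightarrow> nat \<Rightarrow> nat" where
  "cseq g n k = (if k = 0 then (if n = 0 then 1 else 0)
                 else if n < k then 0
                 else (\<Sum>i\<in>{1..n - k + 1}. g i * cseq g (n - i) (k - 1)))"
  by auto
termination by (relation "measure (\<lambda>(g, n, k). k)") auto

declare cseq.simps [simp del]

definition c :: "(nat \<Rightarrow> nat) \<Rightarrow> nat \<Rightarrow> nat \<Rightarrow> nat \<Rightarrow> nat" where
  "c f0 m n k = cseq (fseq f0 (m - 1)) n k"

end

theory Submission
  imports Defs "HOL-Computational_Algebra.Formal_Power_Series"
begin

text \<open>Write \<open>A\<close> for the generating function of a sequence \<open>a\<close> indexed from 1.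
  The invert transform satisfies \<open>B = A + A B\<close>, so \<open>m\<close> iterations turn \<open>A\<close> into
  \<open>A / (1 - m A)\<close>, and \<open>c(n, k)\<close> is the coefficient of \<open>x\<^sup>n\<close> in the \<open>k\<close>-th power
  of the generating function of \<open>f\<^sub>m\<^sub>-\<^sub>1\<close>. For \<open>f\<^sub>0(i) = i\<close> we have
  \<open>F = x / (1 - x)\<^sup>2\<close>, hence that generating function is \<open>H \<circ> F\<close> with
  \<open>H = x / (1 - (m - 1) x)\<close>. Expanding \<open>H\<^sup>k \<circ> F = \<Sum>\<^sub>i [x\<^sup>i] H\<^sup>k \<cdot> F\<^sup>i\<close>, where
  \<open>[x\<^sup>i] H\<^sup>k = (m - 1)\<^sup>i\<^sup>-\<^sup>k (i-1 choose k-1)\<close> and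
  \<open>[x\<^sup>n] F\<^sup>i = (n+i-1 choose 2i-1)\<close>, gives the formula; for \<open>m = 1\<close> only \<open>i = k\<close> survives.\<close>

unbundle fps_syntax

text \<open>The value at 0 is ignored, matching the indexing of the sequences in \<open>invert\<close> and \<open>cseq\<close>.\<close>
definition fps_of_seq :: "(nat \<Rightarrow> nat) \<Rightarrow> 'a::comm_semiring_1 fps" where
  "fps_of_seq a = Abs_fps (\<lambda>n. if n = 0 then 0 else of_nat (a n))"

lemma fps_of_seq_nth: "fps_of_seq a $ n = (if n = 0 then 0 else of_nat (a n))"
  by (simp add: fps_of_seq_def)

lemma fps_of_seq_nth_0 [simp]: "fps_of_seq a $ 0 = 0"
  by (simp add: fps_of_seq_nth)

lemma fps_of_seq_cong:
  assumes "\<And>i. i \<ge> 1 \<Longrightarrow> a i = b i"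
  shows "fps_of_seq a = fps_of_seq b"
  by (rule fps_ext) (simp add: fps_of_seq_nth assms)

lemma fps_of_seq_invert:
  "fps_of_seq (invert a) = fps_of_seq a + fps_of_seq a * (fps_of_seq (invert a) :: 'a::comm_semiring_1 fps)"
proof (rule fps_ext)
  fix n
  show "fps_of_seq (invert a) $ n = (fps_of_seq a + fps_of_seq a * fps_of_seq (invert a) :: 'a fps) $ n"
  proof (cases "n = 0")
    case True
    then show ?thesis by (simp add: fps_mult_nth)
  next
    case False
    have "(fps_of_seq a * fps_of_seq (invert a) :: 'a fps) $ n
        = (\<Sum>i=0..n. fps_of_seq a $ i * fps_of_seq (invert a) $ (n - i))"
      by (simp add: fps_mult_nth)
    also have "\<dots> = (\<Sum>i\<in>{1..<n}. fps_of_seq a $ i * fps_of_seq (invert a) $ (n - i))"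
      by (rule sum.mono_neutral_right) (auto simp: fps_of_seq_nth)
    also have "\<dots> = (\<Sum>i\<in>{1..<n}. of_nat (a i * invert a (n - i)))"
      by (rule sum.cong) (auto simp: fps_of_seq_nth)
    finally show ?thesis
      using False by (simp add: fps_of_seq_nth invert.simps[of a n])
  qed
qed

lemma fps_of_seq_fseq:
  "fps_of_seq (fseq a m) * (1 - of_nat m * fps_of_seq a) = (fps_of_seq a :: 'a::comm_ring_1 fps)"
proof (induction m)
  case 0
  then show ?case by (simp add: fseq_def)
next
  case (Suc m)
  define A :: "'a fps" where "A = fps_of_seq a"
  define G :: "'a fps" where "G = fps_of_seq (fseq a m)"
  define G' :: "'a fps" where "G' = fps_of_seq (fseq a (Suc m))"
  have G'_invert: "G' = G + G * G'"
    unfolding G_def G'_def fseq_def funpow.simps o_apply by (rule fps_of_seq_invert)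
  have G_A: "G * (1 - of_nat m * A) = A"
    using Suc by (simp add: G_def A_def)
  have G'_G: "G' * (1 - G) = G"
    using G'_invert by (simp add: algebra_simps)
  have "G' * (1 - of_nat m * A) = G' * (1 - G) * (1 - of_nat m * A) + G' * (G * (1 - of_nat m * A))"
    by (simp add: algebra_simps)
  also have "\<dots> = A + G' * A"
    by (simp only: G'_G G_A)
  finally show ?case
    by (simp add: G'_def [symmetric] A_def [symmetric] algebra_simps)
qed

lemma fps_of_seq_power_nth:
  "(fps_of_seq g ^ k) $ n = (of_nat (cseq g n k) :: 'a::comm_semiring_1)"
proof (induction k arbitrary: n)
  case 0
  then show ?case by (simp add: cseq.simps)
next
  case (Suc k)
  have starts_0: "(fps_of_seq g :: 'a fps) $ 0 = 0" by simp
  show ?case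
  proof (cases "n < Suc k")
    case True
    then show ?thesis
      by (simp add: cseq.simps startsby_zero_power_prefix[OF starts_0] del: power_Suc)
  next
    case False
    have "(fps_of_seq g ^ Suc k :: 'a fps) $ n
        = (\<Sum>i=0..n. fps_of_seq g $ i * (fps_of_seq g ^ k) $ (n - i))"
      by (simp add: fps_mult_nth)
    also have "\<dots> = (\<Sum>i\<in>{1..n - Suc k + 1}. fps_of_seq g $ i * (fps_of_seq g ^ k) $ (n - i))"
      by (rule sum.mono_neutral_right)
        (use False startsby_zero_power_prefix[OF starts_0] in \<open>auto simp: fps_of_seq_nth\<close>)
    also have "\<dots> = (\<Sum>i\<in>{1..n - Suc k + 1}. of_nat (g i * cseq g (n - i) k))"
      by (rule sum.cong) (auto simp: fps_of_seq_nth Suc)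
    finally show ?thesis
      using False by (subst cseq.simps) simp
  qed
qed

definition fps_geometric :: "'a::comm_semiring_1 \<Rightarrow> 'a fps" where
  "fps_geometric q = Abs_fps (\<lambda>n. q ^ n)"

lemma fps_geometric_power_nth:
  "(fps_geometric q ^ Suc k) $ n = of_nat ((n + k) choose n) * q ^ n"
proof (induction k arbitrary: n)
  case 0
  then show ?case by (simp add: fps_geometric_def)
next
  case (Suc k)
  have "(fps_geometric q ^ Suc (Suc k)) $ n = (fps_geometric q ^ Suc k * fps_geometric q) $ n"
    by (simp add: power_Suc2 del: power_Suc)
  also have "\<dots> = (\<Sum>i=0..n. of_nat ((i + k) choose i) * q ^ i * q ^ (n - i))"
    by (simp only: fps_mult_nth Suc.IH) (simp add: fps_geometric_def)
  also have "\<dots> = (\<Sum>i=0..n. of_nat ((k + i) choose i) * q ^ n)"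
    by (rule sum.cong) (auto simp: mult.assoc power_add [symmetric] add.commute)
  also have "\<dots> = of_nat (\<Sum>i\<le>n. (k + i) choose i) * q ^ n"
    by (simp add: sum_distrib_right atMost_atLeast0)
  also have "\<dots> = of_nat ((n + Suc k) choose n) * q ^ n"
    by (subst sum_choose_lower) (simp add: add.commute)
  finally show ?case .
qed

lemma fps_geometric_times_one_minus:
  "fps_geometric q * (1 - fps_const q * fps_X) = (1 :: 'a::comm_ring_1 fps)"
proof (rule fps_ext)
  fix n
  show "(fps_geometric q * (1 - fps_const q * fps_X)) $ n = (1 :: 'a fps) $ n"
    by (cases n)
      (simp_all add: algebra_simps fps_X_power_mult_right_nth[where k=1, simplified] fps_geometric_def)
qed

lemma fps_X_times_geometric_power_nth:
  assumes "k \<ge> 1"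
  shows "((fps_X * fps_geometric q) ^ k) $ i
       = (if i < k then 0 else of_nat ((i - 1) choose (k - 1)) * q ^ (i - k))"
proof -
  have "(fps_X * fps_geometric q) ^ k = fps_X ^ k * fps_geometric q ^ Suc (k - 1)"
    using assms by (simp add: power_mult_distrib)
  then have "((fps_X * fps_geometric q) ^ k) $ i
      = (if i < k then 0 else of_nat ((i - k + (k - 1)) choose (i - k)) * q ^ (i - k))"
    by (simp add: fps_X_power_mult_nth fps_geometric_power_nth del: power_Suc)
  moreover have "(i - k + (k - 1)) choose (i - k) = (i - 1) choose (k - 1)" if "i \<ge> k"
    using assms that by (subst binomial_symmetric) (auto simp: diff_le_mono)
  ultimately show ?thesis by simp
qed

lemma fps_of_seq_id: "fps_of_seq id = fps_X * fps_geometric (1 :: 'a::comm_semiring_1) ^ 2"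
proof (rule fps_ext)
  fix n
  have "(fps_geometric 1 ^ Suc 1 :: 'a fps) $ (n - 1) = of_nat n" if "n \<ge> 1"
    using that binomial_symmetric[of "n - 1" n] by (subst fps_geometric_power_nth) simp
  then show "fps_of_seq id $ n = (fps_X * fps_geometric 1 ^ 2 :: 'a fps) $ n"
    using fps_X_power_mult_nth[where k=1, of "fps_geometric 1 ^ 2" n]
    by (auto simp: fps_of_seq_nth numeral_2_eq_2)
qed

lemma fps_of_seq_id_power_nth:
  assumes "i \<ge> 1"
  shows "(fps_of_seq id ^ i) $ n = (of_nat ((n + i - 1) choose (2 * i - 1)) :: 'a::comm_semiring_1)"
proof -
  have "(fps_of_seq id ^ i :: 'a fps) = fps_X ^ i * fps_geometric 1 ^ Suc (2 * i - 1)"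
    using assms by (simp add: fps_of_seq_id power_mult_distrib power_mult [symmetric] mult.commute)
  then have nth: "(fps_of_seq id ^ i :: 'a fps) $ n
      = (if n < i then 0 else of_nat ((n - i + (2 * i - 1)) choose (n - i)))"
    by (simp add: fps_X_power_mult_nth fps_geometric_power_nth del: power_Suc)
  show ?thesis
  proof (cases "n < i")
    case True
    then show ?thesis using nth by (simp add: binomial_eq_0)
  next
    case False
    have "n - i + (2 * i - 1) = n + i - 1"
      using False assms by simp
    moreover have "(n + i - 1) choose (n - i) = (n + i - 1) choose (2 * i - 1)"
      using False assms by (subst binomial_symmetric) (auto simp: diff_le_mono)
    ultimately show ?thesis
      using nth False by simp
  qed
qed

lemma fps_eq_compose_X_geometric:
  fixes F G :: "'a::idom fps"
  assumes F0: "F $ 0 = 0" and G: "G * (1 - fps_const q * F) = F"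
  shows "G = (fps_X * fps_geometric q) oo F"
proof -
  have "((fps_X * fps_geometric q) * (1 - fps_const q * fps_X)) oo F = F"
    using F0 fps_geometric_times_one_minus[of q] by (simp add: mult.assoc)
  then have "((fps_X * fps_geometric q) oo F) * (1 - fps_const q * F) = F"
    using F0 by (simp add: fps_compose_mult_distrib fps_compose_sub_distrib)
  moreover have "1 - fps_const q * F \<noteq> 0"
  proof
    assume "1 - fps_const q * F = 0"
    then have "(1 - fps_const q * F) $ 0 = 0" by simp
    then show False using F0 by simp
  qed
  ultimately show ?thesis
    using G by (metis mult_right_cancel)
qed

lemma c_eq_sum:
  assumes f0: "\<And>i. i \<ge> 1 \<Longrightarrow> f0 i = i" and "k \<ge> 1"
  shows "c f0 m n k = (\<Sum>i = k..n. (m - 1) ^ (i - k) * ((i - 1) choose (k - 1))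
                                     * ((n + i - 1) choose (2 * i - 1)))"
proof -
  define F :: "rat fps" where "F = fps_of_seq id"
  define H :: "rat fps" where "H = fps_X * fps_geometric (of_nat (m - 1))"
  have F0: "F $ 0 = 0" by (simp add: F_def)
  have f0_F: "fps_of_seq f0 = F"
    unfolding F_def by (rule fps_of_seq_cong) (simp add: f0)
  have "fps_of_seq (fseq f0 (m - 1)) * (1 - fps_const (of_nat (m - 1)) * F) = F"
    using fps_of_seq_fseq[of f0 "m - 1", where 'a = rat] by (simp add: fps_of_nat f0_F)
  then have fseq_eq: "fps_of_seq (fseq f0 (m - 1)) = H oo F"
    unfolding H_def by (rule fps_eq_compose_X_geometric[OF F0])
  have "of_nat (c f0 m n k) = (fps_of_seq (fseq f0 (m - 1)) ^ k :: rat fps) $ n"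
    unfolding c_def by (rule fps_of_seq_power_nth [symmetric])
  also have "\<dots> = (\<Sum>i=0..n. (H ^ k) $ i * (F ^ i) $ n)"
    unfolding fseq_eq fps_compose_power[OF F0] by (simp add: fps_compose_nth)
  also have "\<dots> = (\<Sum>i=k..n. (H ^ k) $ i * (F ^ i) $ n)"
    by (rule sum.mono_neutral_right) (use \<open>k \<ge> 1\<close> in \<open>auto simp: H_def fps_X_times_geometric_power_nth\<close>)
  also have "\<dots> = (\<Sum>i=k..n. of_nat ((m - 1) ^ (i - k) * ((i - 1) choose (k - 1))
                                      * ((n + i - 1) choose (2 * i - 1))))"
    by (rule sum.cong)
      (use \<open>k \<ge> 1\<close> in \<open>auto simp: H_def F_def fps_X_times_geometric_power_nth fps_of_seq_id_power_nth\<close>)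
  finally show ?thesis
    by (simp only: of_nat_sum [symmetric] of_nat_eq_iff)
qed

theorem corollary26:
  fixes f0 :: "nat \<Rightarrow> nat"
  assumes "\<And>i. i \<ge> 1 \<Longrightarrow> f0 i = i"
  shows "(\<forall>n k. 1 \<le> k \<and> k \<le> n \<longrightarrow> c f0 1 n k = (n + k - 1) choose (2 * k - 1)) \<and>
         (\<forall>m n k. m \<ge> 1 \<and> 1 \<le> k \<and> k \<le> n \<longrightarrow>
           c f0 m n k = (\<Sum>i = k..n. (m - 1) ^ (i - k) * ((i - 1) choose (k - 1)) * ((n + i - 1) choose (2 * i - 1))))"
proof (intro conjI allI impI)
  fix n k :: nat
  assume nk: "1 \<le> k \<and> k \<le> n"
  have "c f0 1 n k = (\<Sum>i = k..n. 0 ^ (i - k) * ((i - 1) choose (k - 1)) * ((n + i - 1) choose (2 * i - 1)))"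
    using c_eq_sum[OF assms] nk by simp
  also have "\<dots> = (\<Sum>i \<in> {k}. 0 ^ (i - k) * ((i - 1) choose (k - 1)) * ((n + i - 1) choose (2 * i - 1)))"
    by (rule sum.mono_neutral_right) (use nk in auto)
  finally show "c f0 1 n k = (n + k - 1) choose (2 * k - 1)" by simp
qed (use c_eq_sum[OF assms] in blast)

end
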